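(* Let $f,g\in\mathbb{H}$ be two linearly independent pure unit quaternions ($f^2=g^2=-1$, $f\neq\pm g$). Let $h\in L^1(\mathbb{R}^2,\mathbb{H})$, and let $h_{\pm}(\mathbf{x})=\frac12\big(h(\mathbf{x})\pm f\,h(\mathbf{x})\,g\big)$. Define $$\mathcal{F}^{g,f}_{c,\pm}\{h\}(\boldsymbol{\omega})=\int_{\mathbb{R}^2} e^{-g x_1\omega_1}\,\widetilde{h_{\pm}(\mathbf{x})}\,e^{-f x_2\omega_2}\,d^2\mathbf{x}.$$ Then $$\mathcal{F}^{g,f}_{c,\pm}\{h\}(\boldsymbol{\omega})=\int_{\mathbb{R}^2}\widetilde{h_{\pm}(\mathbf{x})}\,e^{-f(x_2\omega_2\mp x_1\omega_1)}\,d^2\mathbf{x}=\int_{\mathbb{R}^2}e^{-g(x_1\omega_1\mp x_2\omega_2)}\,\widetilde{h_{\pm}(\mathbf{x})}\,d^2\mathbf{x}.$$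
   Context: $\mathbb{H}$ is the real quaternion algebra, $i^2=j^2=k^2=ijk=-1$. For $q=q_r+q_ii+q_jj+q_kk$, the quaternion conjugate is $\tilde q=q_r-q_ii-q_jj-q_kk$. A pure unit quaternion $f$ satisfies $f^2=-1$, and $e^{\alpha f}=\cos\alpha+f\sin\alpha$. $d^2\mathbf{x}=dx_1dx_2$, $\mathbf{x},\boldsymbol{\omega}\in\mathbb{R}^2$. *)

theory Defs
  imports "HOL-Analysis.Analysis"
begin

text \<open>Real quaternions represented as vectors in real^4, with components
  q$1 = real part, q$2 = i-part, q$3 = j-part, q$4 = k-part.
  Hamilton product with i^2=j^2=k^2=ijk=-1.\<close>

type_synonym quat = "real ^ 4"

definition qmk :: "real \<Rightarrow> real \<Rightarrow> real \<Rightarrow> real \<Rightarrow> quat" where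
  "qmk a b c d = (\<chi> n. if n = 1 then a else if n = 2 then b else if n = 3 then c else d)"

definition qmul :: "quat \<Rightarrow> quat \<Rightarrow> quat" (infixl "\<otimes>" 70) where
  "p \<otimes> q = qmk
     (p$1 * q$1 - p$2 * q$2 - p$3 * q$3 - p$4 * q$4)
     (p$1 * q$2 + p$2 * q$1 + p$3 * q$4 - p$4 * q$3)
     (p$1 * q$3 - p$2 * q$4 + p$3 * q$1 + p$4 * q$2)
     (p$1 * q$4 + p$2 * q$3 - p$3 * q$2 + p$4 * q$1)"

definition qcnj :: "quat \<Rightarrow> quat" where
  "qcnj q = qmk (q$1) (- q$2) (- q$3) (- q$4)"

definition qreal :: "real \<Rightarrow> quat" where
  "qreal a = qmk a 0 0 0"

definition pure_quat :: "quat \<Rightarrow> bool" where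
  "pure_quat q \<longleftrightarrow> q$1 = 0"

text \<open>e^{alpha f} = cos alpha + f sin alpha (for pure unit f).\<close>
definition qexp_ax :: "real \<Rightarrow> quat \<Rightarrow> quat" where
  "qexp_ax \<alpha> f = qreal (cos \<alpha>) + sin \<alpha> *\<^sub>R f"

text \<open>h_{+-}(x) = 1/2 (h(x) +- f h(x) g), with sign s = 1 or s = -1.\<close>
definition hsplit :: "real \<Rightarrow> quat \<Rightarrow> quat \<Rightarrow> (real \<times> real \<Rightarrow> quat) \<Rightarrow> real \<times> real \<Rightarrow> quat" where
  "hsplit s f g h x = (1/2) *\<^sub>R (h x + s *\<^sub>R (f \<otimes> h x \<otimes> g))"

definition QFT_c :: "real \<Rightarrow> quat \<Rightarrow> quat \<Rightarrow> (real \<times> real \<Rightarrow> quat) \<Rightarrow> real \<times> real \<Rightarrow> quat" where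
  "QFT_c s g f h \<omega> = integral\<^sup>L lborel (\<lambda>x.
      qexp_ax (- (fst x * fst \<omega>)) g \<otimes> qcnj (hsplit s f g h x) \<otimes> qexp_ax (- (snd x * snd \<omega>)) f)"

end

theory Submission
  imports Defs
begin

text \<open>Conjugating \<open>h\<^sub>\<plusminus> = (h \<plusminus> f h g)/2\<close> gives \<open>H = (c \<plusminus> g c f)/2\<close> with \<open>c = \<tilde>h\<close>, and
  \<open>f\<^sup>2 = g\<^sup>2 = -1\<close> yields the intertwining relation \<open>g H = \<mp> H f\<close>. Hence
  \<open>e\<^sup>\<alpha>\<^sup>g H = H e\<^sup>\<mp>\<^sup>\<alpha>\<^sup>f\<close>, so the left kernel of the two-sided transform can be moved to the
  right (or the right one to the left) and merged with the other kernel. The identity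
  holds pointwise in \<open>x\<close>.\<close>

lemma qmk_nth [simp]:
  "qmk a b c d $ 1 = a" "qmk a b c d $ 2 = b" "qmk a b c d $ 3 = c" "qmk a b c d $ 4 = d"
  by (simp_all add: qmk_def)

lemma quat_eq_iff: "(p::quat) = q \<longleftrightarrow> p$1 = q$1 \<and> p$2 = q$2 \<and> p$3 = q$3 \<and> p$4 = q$4"
  by (simp add: vec_eq_iff forall_4)

lemma qmul_assoc: "p \<otimes> q \<otimes> r = p \<otimes> (q \<otimes> r)"
  by (simp add: quat_eq_iff qmul_def algebra_simps)

lemma qmul_add_right: "p \<otimes> (q + r) = p \<otimes> q + p \<otimes> r"
  and qmul_add_left: "(q + r) \<otimes> p = q \<otimes> p + r \<otimes> p"
  and qmul_diff_right: "p \<otimes> (q - r) = p \<otimes> q - p \<otimes> r"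
  and qmul_diff_left: "(q - r) \<otimes> p = q \<otimes> p - r \<otimes> p"
  and qmul_minus_left: "(- p) \<otimes> q = - (p \<otimes> q)"
  and qmul_minus_right: "q \<otimes> (- p) = - (q \<otimes> p)"
  and qmul_scaleR_left: "(c *\<^sub>R q) \<otimes> p = c *\<^sub>R (q \<otimes> p)"
  and qmul_scaleR_right: "p \<otimes> (c *\<^sub>R q) = c *\<^sub>R (p \<otimes> q)"
  and qreal_qmul: "qreal c \<otimes> p = c *\<^sub>R p"
  and qmul_qreal: "p \<otimes> qreal c = c *\<^sub>R p"
  by (simp_all add: quat_eq_iff qmul_def qreal_def algebra_simps)

lemmas qmul_linear =
  qmul_add_right qmul_add_left qmul_diff_right qmul_diff_left qmul_minus_left qmul_minus_right
  qmul_scaleR_left qmul_scaleR_right qreal_qmul qmul_qreal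

lemma qcnj_add: "qcnj (p + q) = qcnj p + qcnj q"
  and qcnj_scaleR: "qcnj (c *\<^sub>R p) = c *\<^sub>R qcnj p"
  and qcnj_qmul: "qcnj (p \<otimes> q) = qcnj q \<otimes> qcnj p"
  by (simp_all add: quat_eq_iff qcnj_def qmul_def algebra_simps)

lemma qcnj_pure: "pure_quat p \<Longrightarrow> qcnj p = - p"
  by (simp add: quat_eq_iff qcnj_def pure_quat_def)

lemma qexp_ax_add:
  assumes "f \<otimes> f = qreal (-1)"
  shows "qexp_ax a f \<otimes> qexp_ax b f = qexp_ax (a + b) f"
proof -
  have "qexp_ax a f \<otimes> qexp_ax b f
      = (cos a * cos b) *\<^sub>R qreal 1 + (cos a * sin b + sin a * cos b) *\<^sub>R f
        + (sin a * sin b) *\<^sub>R (f \<otimes> f)"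
    by (simp add: qexp_ax_def qmul_linear algebra_simps) (simp add: quat_eq_iff qreal_def)
  also have "\<dots> = qexp_ax (a + b) f"
    by (simp add: assms qexp_ax_def cos_add sin_add quat_eq_iff qreal_def algebra_simps)
  finally show ?thesis .
qed

lemma qcnj_hsplit:
  assumes "pure_quat f" and "pure_quat g"
  shows "qcnj (hsplit s f g h x) = (1/2) *\<^sub>R (qcnj (h x) + s *\<^sub>R (g \<otimes> qcnj (h x) \<otimes> f))"
  by (simp add: hsplit_def qcnj_add qcnj_scaleR qcnj_qmul qcnj_pure assms
      qmul_minus_left qmul_minus_right qmul_assoc)

lemma qcnj_hsplit_intertwines:
  assumes "pure_quat f" and "pure_quat g"
    and ff: "f \<otimes> f = qreal (-1)" and gg: "g \<otimes> g = qreal (-1)"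
    and "s * s = 1"
  shows "g \<otimes> qcnj (hsplit s f g h x) = - s *\<^sub>R (qcnj (hsplit s f g h x) \<otimes> f)"
proof -
  define c where "c = qcnj (h x)"
  have "g \<otimes> (g \<otimes> c \<otimes> f) = - (c \<otimes> f)"
    by (simp add: qmul_assoc[symmetric] gg qreal_qmul qmul_minus_left)
  moreover have "g \<otimes> c \<otimes> f \<otimes> f = - (g \<otimes> c)"
    by (simp add: qmul_assoc ff qmul_qreal qmul_minus_right)
  ultimately show ?thesis
    using \<open>s * s = 1\<close>
    by (simp add: qcnj_hsplit[OF assms(1,2)] c_def[symmetric] qmul_linear qmul_assoc algebra_simps)
qed

lemma qexp_ax_intertwine:
  assumes "g \<otimes> H = - s *\<^sub>R (H \<otimes> f)" and "s = 1 \<or> s = -1"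
  shows "qexp_ax t g \<otimes> H = H \<otimes> qexp_ax (- s * t) f"
proof -
  have "cos (s * t) = cos t" "sin (s * t) = s * sin t"
    using \<open>s = 1 \<or> s = -1\<close> by auto
  then show ?thesis
    by (simp add: qexp_ax_def qmul_linear assms(1) algebra_simps)
qed

lemma two_sided_kernel_to_right:
  assumes "g \<otimes> H = - s *\<^sub>R (H \<otimes> f)" and "s = 1 \<or> s = -1" and "f \<otimes> f = qreal (-1)"
  shows "qexp_ax a g \<otimes> H \<otimes> qexp_ax b f = H \<otimes> qexp_ax (b - s * a) f"
  using qexp_ax_intertwine[OF assms(1,2), of a]
  by (simp add: qmul_assoc qexp_ax_add[OF assms(3)] algebra_simps)

lemma two_sided_kernel_to_left:
  assumes "g \<otimes> H = - s *\<^sub>R (H \<otimes> f)" and "s = 1 \<or> s = -1" and "g \<otimes> g = qreal (-1)"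
  shows "qexp_ax a g \<otimes> H \<otimes> qexp_ax b f = qexp_ax (a - s * b) g \<otimes> H"
proof -
  have "s * s = 1"
    using \<open>s = 1 \<or> s = -1\<close> by auto
  then have "H \<otimes> qexp_ax b f = qexp_ax (- s * b) g \<otimes> H"
    using qexp_ax_intertwine[OF assms(1,2), of "- s * b"] by (simp add: mult.assoc[symmetric])
  then show ?thesis
    by (simp add: qmul_assoc qmul_assoc[symmetric] qexp_ax_add[OF assms(3)] algebra_simps)
qed

theorem theorem3:
  fixes f g :: quat and h :: "real \<times> real \<Rightarrow> quat" and s :: real and \<omega> :: "real \<times> real"
  assumes "pure_quat f" and "pure_quat g"
    and "f \<otimes> f = qreal (-1)" and "g \<otimes> g = qreal (-1)"
    and "f \<noteq> g" and "f \<noteq> - g"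
    and "integrable lborel h"
    and "s = 1 \<or> s = -1"
  shows "QFT_c s g f h \<omega> =
           integral\<^sup>L lborel (\<lambda>x. qcnj (hsplit s f g h x)
              \<otimes> qexp_ax (- (snd x * snd \<omega> - s * (fst x * fst \<omega>))) f)
       \<and> QFT_c s g f h \<omega> =
           integral\<^sup>L lborel (\<lambda>x. qexp_ax (- (fst x * fst \<omega> - s * (snd x * snd \<omega>))) g
              \<otimes> qcnj (hsplit s f g h x))"
proof -
  have "s * s = 1"
    using \<open>s = 1 \<or> s = -1\<close> by auto
  then have intertwines: "\<And>x. g \<otimes> qcnj (hsplit s f g h x) = - s *\<^sub>R (qcnj (hsplit s f g h x) \<otimes> f)"
    using qcnj_hsplit_intertwines[OF assms(1-4)] by blast
  note to_right = two_sided_kernel_to_right[OF intertwines \<open>s = 1 \<or> s = -1\<close> assms(3)]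
  note to_left = two_sided_kernel_to_left[OF intertwines \<open>s = 1 \<or> s = -1\<close> assms(4)]
  show ?thesis
  proof
    show "QFT_c s g f h \<omega> = integral\<^sup>L lborel (\<lambda>x. qcnj (hsplit s f g h x)
        \<otimes> qexp_ax (- (snd x * snd \<omega> - s * (fst x * fst \<omega>))) f)"
      unfolding QFT_c_def to_right by (simp add: algebra_simps)
    show "QFT_c s g f h \<omega> = integral\<^sup>L lborel (\<lambda>x.
        qexp_ax (- (fst x * fst \<omega> - s * (snd x * snd \<omega>))) g \<otimes> qcnj (hsplit s f g h x))"
      unfolding QFT_c_def to_left by (simp add: algebra_simps)
  qed
qed

end
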